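(* In generalized non-signalling theory (box world), consider a system of boxes each of which has at least two possible outputs. Let $(\mathbf{a}_1,\mathbf{x}_1)$ and $(\mathbf{a}_2,\mathbf{x}_2)$ be output-input pairs of the system such that it is not the case that both $\mathbf{a}_1=\mathbf{a}_2$ and $\mathbf{x}_1=\mathbf{x}_2$. Then there exists an allowed state $\mathbf{p}$ with $p(\mathbf{a}_1|\mathbf{x}_1)=0$ and $p(\mathbf{a}_2|\mathbf{x}_2)>0$.
   Context: Box world (GNST): a box has a finite set of inputs and outputs. A system of $n$ boxes has as allowed states all collections $p(\mathbf{a}|\mathbf{x})=p(a_1,\ldots,a_n|x_1,\ldots,x_n)\ge0$ that are normalized ($\sum_{\mathbf{a}}p(\mathbf{a}|\mathbf{x})=1$ for all $\mathbf{x}$) and no-signalling (for each $i$, $\sum_{a_i}p(\mathbf{a}|\mathbf{x})$ is independent of $x_i$). An output-input pair is a pair $(\mathbf{a},\mathbf{x})$ of an output tuple and an input tuple. *)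

theory Defs
  imports Complex_Main "HOL-Library.FuncSet"
begin

definition out_tuples :: "nat \<Rightarrow> (nat \<Rightarrow> 'a set) \<Rightarrow> (nat \<Rightarrow> 'a) set" where
  "out_tuples n A = PiE {..<n} A"

definition in_tuples :: "nat \<Rightarrow> (nat \<Rightarrow> 'x set) \<Rightarrow> (nat \<Rightarrow> 'x) set" where
  "in_tuples n X = PiE {..<n} X"

text \<open>Allowed states of box world: nonnegative, normalised, no-signalling.
No-signalling: for each box i, the marginal obtained by summing over a_i
does not depend on x_i (given the other inputs).\<close>

definition allowed_state ::
  "nat \<Rightarrow> (nat \<Rightarrow> 'a set) \<Rightarrow> (nat \<Rightarrow> 'x set) \<Rightarrow> ((nat \<Rightarrow> 'a) \<Rightarrow> (nat \<Rightarrow> 'x) \<Rightarrow> real) \<Rightarrow> bool" where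
  "allowed_state n A X p \<longleftrightarrow>
     (\<forall>a\<in>out_tuples n A. \<forall>x\<in>in_tuples n X. p a x \<ge> 0) \<and>
     (\<forall>x\<in>in_tuples n X. (\<Sum>a\<in>out_tuples n A. p a x) = 1) \<and>
     (\<forall>i<n. \<forall>x\<in>in_tuples n X. \<forall>x'\<in>in_tuples n X.
        (\<forall>j<n. j \<noteq> i \<longrightarrow> x j = x' j) \<longrightarrow>
        (\<forall>a\<in>out_tuples n A.
           (\<Sum>b\<in>A i. p (a(i := b)) x) = (\<Sum>b\<in>A i. p (a(i := b)) x')))"

end

(* Deterministic local strategies already suffice: if every box i answers input y with
   output g i y, the resulting point-mass state is nonnegative, normalised and
   no-signalling, since the marginal over box i only tests the other boxes' outputs,
   which depend only on the other boxes' inputs.  If a1 \<noteq> a2, let every box always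
   output a2.  If a1 = a2 then x1 \<noteq> x2 differ at some box i; that box outputs a2 i on
   input x2 i and an output different from a2 i (available since it has at least two
   outputs) on every other input, so the strategy produces a2 at x2 but not a1 at x1. *)
theory Submission
  imports Defs
begin

(* The value undefined outside the boxes keeps the response inside the extensional
   function space out_tuples n A. *)
definition local_response :: "nat \<Rightarrow> (nat \<Rightarrow> 'x \<Rightarrow> 'a) \<Rightarrow> (nat \<Rightarrow> 'x) \<Rightarrow> nat \<Rightarrow> 'a" where
  "local_response n g x = (\<lambda>j. if j < n then g j (x j) else undefined)"

definition deterministic_state ::
    "nat \<Rightarrow> (nat \<Rightarrow> 'x \<Rightarrow> 'a) \<Rightarrow> (nat \<Rightarrow> 'a) \<Rightarrow> (nat \<Rightarrow> 'x) \<Rightarrow> real" where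
  "deterministic_state n g a x = (if a = local_response n g x then 1 else 0)"

lemma local_response_in_out_tuples:
  assumes "\<And>j y. j < n \<Longrightarrow> g j y \<in> A j"
  shows "local_response n g x \<in> out_tuples n A"
  using assms by (auto simp: out_tuples_def local_response_def PiE_def extensional_def)

lemma local_response_const:
  fixes x :: "nat \<Rightarrow> 'x"
  assumes "a \<in> out_tuples n A"
  shows "local_response n (\<lambda>j (y::'x). a j) x = a"
  using assms by (auto simp: local_response_def out_tuples_def fun_eq_iff PiE_def extensional_def)

lemma sum_indicator_fun_upd:
  assumes "finite B" and "r i \<in> B"
  shows "(\<Sum>b\<in>B. if f(i := b) = r then 1 else 0) =
    (if \<forall>j. j \<noteq> i \<longrightarrow> f j = r j then 1 else (0::real))"
proof -
  have "(f(i := b) = r) \<longleftrightarrow> b = r i \<and> (\<forall>j. j \<noteq> i \<longrightarrow> f j = r j)" for b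
    by (auto simp: fun_eq_iff)
  then have "(\<Sum>b\<in>B. if f(i := b) = r then 1 else 0) =
      (\<Sum>b\<in>B. if b = r i then (if \<forall>j. j \<noteq> i \<longrightarrow> f j = r j then 1 else 0) else (0::real))"
    by (intro sum.cong) auto
  then show ?thesis
    using assms by (simp add: sum.delta')
qed

lemma allowed_state_deterministic_state:
  fixes g :: "nat \<Rightarrow> 'x \<Rightarrow> 'a" and X :: "nat \<Rightarrow> 'x set"
  assumes fin: "\<And>i. i < n \<Longrightarrow> finite (A i)"
    and g: "\<And>j y. j < n \<Longrightarrow> g j y \<in> A j"
  shows "allowed_state n A X (deterministic_state n g)"
  unfolding allowed_state_def
proof (intro conjI ballI allI impI)
  fix x :: "nat \<Rightarrow> 'x"
  have "finite (out_tuples n A)"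
    unfolding out_tuples_def by (rule finite_PiE) (auto simp: fin)
  then show "(\<Sum>a\<in>out_tuples n A. deterministic_state n g a x) = 1"
    using local_response_in_out_tuples[OF g]
    by (simp add: deterministic_state_def sum.delta')
next
  fix i a and x x' :: "nat \<Rightarrow> 'x"
  assume i: "i < n" and agree: "\<forall>j<n. j \<noteq> i \<longrightarrow> x j = x' j"
  have marginal: "(\<Sum>b\<in>A i. deterministic_state n g (a(i := b)) y) =
      (if \<forall>j. j \<noteq> i \<longrightarrow> a j = local_response n g y j then 1 else 0)" for y
    unfolding deterministic_state_def
    using fin[OF i] g[OF i] i
    by (intro sum_indicator_fun_upd) (auto simp: local_response_def)
  have "local_response n g x j = local_response n g x' j" if "j \<noteq> i" for j
    using agree that by (simp add: local_response_def)
  then show "(\<Sum>b\<in>A i. deterministic_state n g (a(i := b)) x) =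
      (\<Sum>b\<in>A i. deterministic_state n g (a(i := b)) x')"
    by (simp add: marginal)
qed (simp add: deterministic_state_def)

lemma in_tuples_neq_imp_differ_at:
  assumes "x1 \<in> in_tuples n X" and "x2 \<in> in_tuples n X" and "x1 \<noteq> x2"
  obtains i where "i < n" and "x1 i \<noteq> x2 i"
  using assms extensionalityI[of x1 "{..<n}" x2]
  by (auto simp: in_tuples_def PiE_def)

lemma card_ge_2_obtain_other:
  assumes "finite B" and "card B \<ge> 2"
  obtains b where "b \<in> B" and "b \<noteq> c"
proof -
  have "\<not> card B \<le> Suc 0"
    using assms(2) by simp
  then obtain b1 b2 where "b1 \<in> B" "b2 \<in> B" "b1 \<noteq> b2"
    using card_le_Suc0_iff_eq[OF assms(1)] by blast
  then show ?thesis
    using that by blast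
qed

theorem lemma8:
  fixes n :: nat and A :: "nat \<Rightarrow> 'a set" and X :: "nat \<Rightarrow> 'x set"
    and a1 a2 :: "nat \<Rightarrow> 'a" and x1 x2 :: "nat \<Rightarrow> 'x"
  assumes "\<And>i. i < n \<Longrightarrow> finite (A i)"
    and "\<And>i. i < n \<Longrightarrow> finite (X i)"
    and "\<And>i. i < n \<Longrightarrow> card (A i) \<ge> 2"
    and "a1 \<in> out_tuples n A" and "a2 \<in> out_tuples n A"
    and "x1 \<in> in_tuples n X" and "x2 \<in> in_tuples n X"
    and "\<not> (a1 = a2 \<and> x1 = x2)"
  shows "\<exists>p. allowed_state n A X p \<and> p a1 x1 = 0 \<and> p a2 x2 > 0"
proof (cases "a1 = a2")
  case False
  let ?g = "\<lambda>j (y::'x). a2 j"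
  have "allowed_state n A X (deterministic_state n ?g)"
    using assms(1,5) by (intro allowed_state_deterministic_state) (auto simp: out_tuples_def)
  moreover have "deterministic_state n ?g a x = (if a = a2 then 1 else 0)" for a x
    unfolding deterministic_state_def local_response_const[OF assms(5)] ..
  ultimately show ?thesis
    using False by auto
next
  case True
  with assms(8) have "x1 \<noteq> x2"
    by simp
  then obtain i where i: "i < n" "x1 i \<noteq> x2 i"
    by (rule in_tuples_neq_imp_differ_at[OF assms(6,7)])
  obtain b where b: "b \<in> A i" "b \<noteq> a2 i"
    by (rule card_ge_2_obtain_other[OF assms(1,3)[OF i(1)]])
  let ?g = "\<lambda>j y. if j = i \<and> y \<noteq> x2 i then b else a2 j"
  have "allowed_state n A X (deterministic_state n ?g)"
    using assms(1,5) b by (intro allowed_state_deterministic_state) (auto simp: out_tuples_def)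
  moreover have "deterministic_state n ?g a2 x2 = 1"
  proof -
    have "local_response n ?g x2 = local_response n (\<lambda>j (y::'x). a2 j) x2"
      by (auto simp: local_response_def fun_eq_iff)
    then show ?thesis
      by (simp add: deterministic_state_def local_response_const[OF assms(5)])
  qed
  moreover have "deterministic_state n ?g a1 x1 = 0"
  proof -
    have "local_response n ?g x1 i \<noteq> a1 i"
      using i b True by (simp add: local_response_def)
    then show ?thesis
      by (auto simp: deterministic_state_def)
  qed
  ultimately show ?thesis
    by auto
qed

end
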